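(* Let $A$ be a sub-tree of $T$, $I\subseteq\mathcal{I}_A$, and let $I=I'\cup I''$ with $I'\cap I''=\emptyset$. For every $S\in\mathcal{M}_A^I$, setting $S'=S\cap V_A^{I'}$ and $S''=S\cap V_A^{I''}$, we have $S'\in\mathcal{M}_A^{I'}$ and $S''\in\mathcal{M}_A^{I''}$. In particular, $\mathcal{M}_A$ is contained in $\{S_0\cup S_1\cup\dots\cup S_m: S_i\in\mathcal{M}_A^{\{i\}}\}$.
   Context: Setting. $T$ is a finite tree rooted at $r_T$, node set $V_T$; every edge $e$ has weight $w_e\ge 0$. Every node $v$ has a probability $\pi_v\in(0,1]$ and a prize $p_v\in\mathbb{R}$. $d(v)$ is the total weight of the path from $r_T$ to $v$. A random set $\omega\subseteq V_T$ contains each node $v$ independently with probability $\pi_v$. For $S\subseteq V_T$, $P(S)=1-\prod_{s\in S}(1-\pi_s)$ ($P(\emptyset)=0$). For a node $a$, the sub-tree $A$ rooted at $r_A=a$ consists of $a$ and all its descendants, with node set $V_A$; if $a$ has children $c_1,\dots,c_m$, then $A_i$ ($1\le i\le m$) is the sub-tree rooted at $c_i$, $A_0$ is the sub-tree consisting of the single node $r_A$, $\mathcal{I}_A=\{0,1,\dots,m\}$, and $V_A^I=\bigcup_{i\in I}V_{A_i}$ for $I\subseteq\mathcal{I}_A$. For $Q\subseteq V_T$, $W(Q)$ is the total weight of the edges lying on at least one path from $r_T$ to a node of $Q$. For $S\subseteq V_A$ and $x\le d(r_A)$ the expected profit is $G(S,x)=\sum_{s\in S}p_s\pi_s-\mathbb{E}[W(S\cap\omega)]+x\,P(S)$.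 Characteristic function. For a sub-tree $A$, $I\subseteq\mathcal{I}_A$ and $x\in[0,d(r_A)]$, $f_A^I(x)=\max_{S\subseteq V_A^I}G(S,x)$, and $f_A=f_A^{\mathcal{I}_A}$. A set $S\subseteq V_A^I$ with $G(S,x)=f_A^I(x)$ is an optimal set (for $f_A^I$) at $x$. The matryoshka $\mathcal{M}_A^I$ is the family of all $S\subseteq V_A^I$ such that for some $x\in[0,d(r_A)]$, $S$ is an optimal set at $x$ and no proper superset of $S$ contained in $V_A^I$ is optimal at $x$; $\mathcal{M}_A=\mathcal{M}_A^{\mathcal{I}_A}$. *)

theory Defs
  imports Complex_Main
begin

text \<open>A finite rooted tree with parent pointers. Every non-root node v carries the
  edge (v, parent v), whose weight is weight v. Prize, probability per node.\<close>

record 'a wtree =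
  nodes  :: "'a set"
  root   :: 'a
  parent :: "'a \<Rightarrow> 'a"
  weight :: "'a \<Rightarrow> real"
  prob   :: "'a \<Rightarrow> real"
  prize  :: "'a \<Rightarrow> real"

definition anc :: "'a wtree \<Rightarrow> 'a \<Rightarrow> 'a set" where
  "anc T v = {(parent T ^^ k) v | k. True}"

definition is_wtree :: "'a wtree \<Rightarrow> bool" where
  "is_wtree T \<longleftrightarrow> finite (nodes T) \<and> root T \<in> nodes T \<and> parent T (root T) = root T
     \<and> (\<forall>v\<in>nodes T. parent T v \<in> nodes T)
     \<and> (\<forall>v\<in>nodes T. \<exists>k. (parent T ^^ k) v = root T)
     \<and> (\<forall>v\<in>nodes T. v \<noteq> root T \<longrightarrow> weight T v \<ge> 0)
     \<and> (\<forall>v\<in>nodes T. 0 < prob T v \<and> prob T v \<le> 1)"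

definition subtree :: "'a wtree \<Rightarrow> 'a \<Rightarrow> 'a set" where
  "subtree T a = {u \<in> nodes T. a \<in> anc T u}"

definition children :: "'a wtree \<Rightarrow> 'a \<Rightarrow> 'a set" where
  "children T a = {c \<in> nodes T. c \<noteq> root T \<and> parent T c = a}"

text \<open>Index set I_A: None plays the role of index 0 (the single-node sub-tree A_0),
  Some c the role of the index of child c.\<close>
definition idx :: "'a wtree \<Rightarrow> 'a \<Rightarrow> 'a option set" where
  "idx T a = insert None (Some ` children T a)"

definition blk :: "'a wtree \<Rightarrow> 'a \<Rightarrow> 'a option \<Rightarrow> 'a set" where
  "blk T a i = (case i of None \<Rightarrow> {a} | Some c \<Rightarrow> subtree T c)"

definition VI :: "'a wtree \<Rightarrow> 'a \<Rightarrow> 'a option set \<Rightarrow> 'a set" where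
  "VI T a I = (\<Union>i\<in>I. blk T a i)"

definition Wt :: "'a wtree \<Rightarrow> 'a set \<Rightarrow> real" where
  "Wt T Q = sum (weight T) {u \<in> nodes T. u \<noteq> root T \<and> (\<exists>q\<in>Q. u \<in> anc T q)}"

definition dist :: "'a wtree \<Rightarrow> 'a \<Rightarrow> real" where
  "dist T v = Wt T {v}"

definition PrS :: "'a wtree \<Rightarrow> 'a set \<Rightarrow> real" where
  "PrS T S = 1 - (\<Prod>s\<in>S. 1 - prob T s)"

text \<open>E[W(S \<inter> \<omega>)], \<omega> containing each node v independently with probability prob v.\<close>
definition EW :: "'a wtree \<Rightarrow> 'a set \<Rightarrow> real" where
  "EW T S = (\<Sum>X\<in>Pow S. (\<Prod>x\<in>X. prob T x) * (\<Prod>x\<in>S - X. 1 - prob T x) * Wt T X)"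

definition G :: "'a wtree \<Rightarrow> 'a set \<Rightarrow> real \<Rightarrow> real" where
  "G T S x = (\<Sum>s\<in>S. prize T s * prob T s) - EW T S + x * PrS T S"

definition optimal :: "'a wtree \<Rightarrow> 'a \<Rightarrow> 'a option set \<Rightarrow> 'a set \<Rightarrow> real \<Rightarrow> bool" where
  "optimal T a I S x \<longleftrightarrow> S \<subseteq> VI T a I \<and> (\<forall>S'. S' \<subseteq> VI T a I \<longrightarrow> G T S' x \<le> G T S x)"

definition matr :: "'a wtree \<Rightarrow> 'a \<Rightarrow> 'a option set \<Rightarrow> 'a set set" where
  "matr T a I = {S. \<exists>x. 0 \<le> x \<and> x \<le> dist T a \<and> optimal T a I S x
                      \<and> \<not> (\<exists>S'. S \<subset> S' \<and> optimal T a I S' x)}"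

end

theory Submission
  imports Defs
begin

text \<open>Nodes in different blocks of the sub-tree rooted at a share exactly the edges of the path
  from the root to a. Hence for S1 \<subseteq> V^I1 and S2 \<subseteq> V^I2 the cost of visiting S1 \<union> S2
  exceeds the separate costs only by d(a) when both parts are hit, and by independence
  G(S1 \<union> S2, x) = G(S1, x) + G(S2, x) + (d(a) - x) P(S1) P(S2).
  For fixed S2 this is G(S1, x') + G(S2, x) with x' = x + (d(a) - x) P(S2) \<in> [x, d(a)], so an
  optimal set S1 \<union> S2 at x restricts to an optimal set S1 at x', and a strictly larger optimal
  set at x' would enlarge S1 \<union> S2 optimally at x.\<close>

lemma funpow_shift: "(f ^^ k) (f v) = (f ^^ Suc k) v"
  by (metis comp_apply funpow_Suc_right)

lemma funpow_fixpoint: "f r = r \<Longrightarrow> (f ^^ n) r = r"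
  by (induction n) auto

lemma range_funpow_unfold: "range (\<lambda>k. (f ^^ k) v) = insert v (range (\<lambda>k. (f ^^ k) (f v)))"
proof (intro equalityI subsetI)
  fix u assume "u \<in> range (\<lambda>k. (f ^^ k) v)"
  then obtain k where u: "u = (f ^^ k) v" by blast
  show "u \<in> insert v (range (\<lambda>k. (f ^^ k) (f v)))"
  proof (cases k)
    case (Suc j)
    then have "u \<in> range (\<lambda>k. (f ^^ k) (f v))"
      using u funpow_shift[of j f v] by (metis rangeI)
    then show ?thesis by (rule insertI2)
  qed (simp add: u)
next
  fix u assume "u \<in> insert v (range (\<lambda>k. (f ^^ k) (f v)))"
  then consider "u = (f ^^ 0) v" | j where "u = (f ^^ Suc j) v"
    unfolding funpow_shift by auto
  then show "u \<in> range (\<lambda>k. (f ^^ k) v)"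
    by cases (erule ssubst, rule rangeI)+
qed

lemma anc_eq_range: "anc T v = range (\<lambda>k. (parent T ^^ k) v)"
  unfolding anc_def by auto

lemma anc_self: "v \<in> anc T v"
  unfolding anc_eq_range by (rule range_eqI[of _ _ 0]) simp

lemma anc_parent: "anc T v = insert v (anc T (parent T v))"
  unfolding anc_eq_range by (rule range_funpow_unfold)

lemma anc_trans: "u \<in> anc T v \<Longrightarrow> v \<in> anc T w \<Longrightarrow> u \<in> anc T w"
  unfolding anc_eq_range by (auto simp: funpow_add[symmetric, THEN fun_cong, simplified])

lemma anc_linear:
  assumes "u \<in> anc T q" "c \<in> anc T q"
  shows "u \<in> anc T c \<or> c \<in> anc T u"
proof -
  obtain m n where m: "u = (parent T ^^ m) q" and n: "c = (parent T ^^ n) q"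
    using assms unfolding anc_eq_range by auto
  have "(parent T ^^ (j + i)) q = (parent T ^^ j) ((parent T ^^ i) q)" for i j
    by (simp add: funpow_add)
  then have "u = (parent T ^^ (m - n)) c \<or> c = (parent T ^^ (n - m)) u"
    using m n by (metis le_add_diff_inverse2 nat_le_linear)
  then show ?thesis
    unfolding anc_eq_range by (auto intro: rangeI)
qed

lemma not_in_anc_parent:
  assumes "is_wtree T" "v \<in> nodes T" "v \<noteq> root T"
  shows "v \<notin> anc T (parent T v)"
proof
  assume "v \<in> anc T (parent T v)"
  then obtain k where "(parent T ^^ k) (parent T v) = v"
    unfolding anc_eq_range by (metis rangeE)
  then have cycle: "(parent T ^^ Suc k) v = v"
    by (simp only: funpow_shift)
  have periodic: "(parent T ^^ (Suc k * m)) v = v" for m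
    using funpow_mod_eq[where m="Suc k * m", OF cycle] by (simp only: mod_mult_self1_is_0 funpow_0)
  obtain n where n: "(parent T ^^ n) v = root T"
    using assms unfolding is_wtree_def by blast
  have "(parent T ^^ (Suc k * n)) v = (parent T ^^ (k * n)) ((parent T ^^ n) v)"
    by (metis add.commute comp_apply funpow_add mult_Suc)
  also have "\<dots> = root T"
    using n assms(1) funpow_fixpoint unfolding is_wtree_def by metis
  finally show False
    using periodic assms(3) by simp
qed

subsection \<open>Blocks of a sub-tree\<close>

context
  fixes T :: "'a wtree"
  assumes tree: "is_wtree T"
begin

lemma anc_child: "c \<in> children T a \<Longrightarrow> anc T c = insert c (anc T a)"
  using anc_parent[of T c] unfolding children_def by simp

lemma child_not_in_anc: "c \<in> children T a \<Longrightarrow> c \<notin> anc T a"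
  using not_in_anc_parent[OF tree] unfolding children_def by blast

lemma children_no_common_descendant:
  assumes "c1 \<in> children T a" "c2 \<in> children T a" "c1 \<noteq> c2"
    and "c1 \<in> anc T q" "c2 \<in> anc T q"
  shows False
proof -
  have "\<not> c1 \<in> anc T c2" if "c1 \<in> children T a" "c2 \<in> children T a" "c1 \<noteq> c2" for c1 c2
    using that anc_child[of c2 a] child_not_in_anc[of c1 a] by auto
  then show False
    using anc_linear[OF assms(4,5)] assms(1-3) by blast
qed

lemma child_of_Some_idx: "Some c \<in> idx T a \<Longrightarrow> c \<in> children T a"
  unfolding idx_def by auto

lemma subtree_root_in_anc_blk:
  assumes "i \<in> idx T a" "q \<in> blk T a i"
  shows "a \<in> anc T q"
proof (cases i)
  case None
  then show ?thesis using assms anc_self by (simp add: blk_def)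
next
  case (Some c)
  then have "c \<in> anc T q" "a \<in> anc T c"
    using assms anc_child[OF child_of_Some_idx] anc_self[of a T] by (auto simp: blk_def subtree_def)
  then show ?thesis using anc_trans by metis
qed

lemma common_anc_blk:
  assumes "i \<in> idx T a" "j \<in> idx T a" "i \<noteq> j"
    and "q1 \<in> blk T a i" "q2 \<in> blk T a j" "u \<in> anc T q1" "u \<in> anc T q2"
  shows "u \<in> anc T a"
proof (cases "i = None \<or> j = None")
  case True
  then show ?thesis using assms by (auto simp: blk_def)
next
  case False
  then obtain c1 c2 where ij: "i = Some c1" "j = Some c2" by auto
  then have c: "c1 \<in> children T a" "c2 \<in> children T a" "c1 \<noteq> c2"
    using assms(1-3) child_of_Some_idx by auto
  have q: "c1 \<in> anc T q1" "c2 \<in> anc T q2"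
    using assms(4,5) ij by (simp_all add: blk_def subtree_def)
  have c1_q2: "c1 \<notin> anc T q2"
    using children_no_common_descendant[OF c _ q(2)] by blast
  from anc_linear[OF assms(6) q(1)] show ?thesis
  proof
    assume "u \<in> anc T c1"
    moreover have "u \<noteq> c1" using c1_q2 assms(7) by blast
    ultimately show ?thesis using anc_child[OF c(1)] by simp
  next
    assume "c1 \<in> anc T u"
    then show ?thesis using c1_q2 anc_trans[OF _ assms(7)] by blast
  qed
qed

lemma blk_disjoint:
  assumes "i \<in> idx T a" "j \<in> idx T a" "i \<noteq> j" "q \<in> blk T a i" "q \<in> blk T a j"
  shows False
proof -
  have q: "q \<in> anc T a"
    using common_anc_blk[OF assms] anc_self by metis
  obtain c where "c \<in> children T a" "c \<in> anc T q"
    using assms child_of_Some_idx by (cases i; cases j) (auto simp: blk_def subtree_def)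
  then show False
    using q anc_trans child_not_in_anc by metis
qed

lemma common_anc_VI:
  assumes "I1 \<subseteq> idx T a" "I2 \<subseteq> idx T a" "I1 \<inter> I2 = {}"
    and "q1 \<in> VI T a I1" "q2 \<in> VI T a I2" "u \<in> anc T q1" "u \<in> anc T q2"
  shows "u \<in> anc T a"
  using assms common_anc_blk unfolding VI_def by blast

lemma VI_disjoint:
  assumes "I1 \<subseteq> idx T a" "I2 \<subseteq> idx T a" "I1 \<inter> I2 = {}"
  shows "VI T a I1 \<inter> VI T a I2 = {}"
  using assms blk_disjoint unfolding VI_def by blast

lemma anc_subset_anc_VI:
  assumes "I \<subseteq> idx T a" "q \<in> VI T a I"
  shows "anc T a \<subseteq> anc T q"
proof -
  obtain i where "i \<in> idx T a" "q \<in> blk T a i"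
    using assms unfolding VI_def by auto
  then have "a \<in> anc T q" by (rule subtree_root_in_anc_blk)
  then show ?thesis by (blast intro: anc_trans)
qed

end

lemma VI_subset_nodes: "a \<in> nodes T \<Longrightarrow> VI T a I \<subseteq> nodes T"
  unfolding VI_def blk_def subtree_def by (auto split: option.splits)

lemma VI_Un: "VI T a (I1 \<union> I2) = VI T a I1 \<union> VI T a I2"
  unfolding VI_def by auto

subsection \<open>Expected cost of a union of independent parts\<close>

definition prob_pattern :: "'a wtree \<Rightarrow> 'a set \<Rightarrow> 'a set \<Rightarrow> real" where
  "prob_pattern T S X = (\<Prod>x\<in>X. prob T x) * (\<Prod>x\<in>S - X. 1 - prob T x)"

lemma EW_eq_sum_prob_pattern: "EW T S = (\<Sum>X\<in>Pow S. prob_pattern T S X * Wt T X)"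
  unfolding EW_def prob_pattern_def by simp

lemma sum_prob_pattern: "finite S \<Longrightarrow> (\<Sum>X\<in>Pow S. prob_pattern T S X) = 1"
  using prod_add[of S "prob T" "\<lambda>x. 1 - prob T x"] unfolding prob_pattern_def by simp

lemma sum_prob_pattern_nonempty:
  assumes "finite S"
  shows "(\<Sum>X\<in>Pow S. prob_pattern T S X * of_bool (X \<noteq> {})) = PrS T S"
proof -
  let ?p = "prob_pattern T S"
  have Pow: "finite (Pow S)" "{} \<in> Pow S"
    using assms by auto
  have "(\<Sum>X\<in>Pow S. ?p X * of_bool (X \<noteq> {})) = (\<Sum>X\<in>Pow S - {{}}. ?p X * of_bool (X \<noteq> {}))"
    using sum.remove[OF Pow, of "\<lambda>X. ?p X * of_bool (X \<noteq> {})"] by simp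
  also have "\<dots> = (\<Sum>X\<in>Pow S - {{}}. ?p X)"
    by (rule sum.cong) auto
  also have "\<dots> = 1 - ?p {}"
    using sum.remove[OF Pow, of ?p] sum_prob_pattern[OF assms, of T] by simp
  also have "\<dots> = PrS T S"
    unfolding prob_pattern_def PrS_def by simp
  finally show ?thesis .
qed

lemma prob_pattern_Un:
  assumes "finite S1" "finite S2" "S1 \<inter> S2 = {}" "X1 \<subseteq> S1" "X2 \<subseteq> S2"
  shows "prob_pattern T (S1 \<union> S2) (X1 \<union> X2) = prob_pattern T S1 X1 * prob_pattern T S2 X2"
proof -
  have fin: "finite X1" "finite X2"
    using assms(1,2,4,5) by (auto intro: finite_subset)
  have "(\<Prod>x\<in>X1 \<union> X2. prob T x) = (\<Prod>x\<in>X1. prob T x) * (\<Prod>x\<in>X2. prob T x)"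
    using prod.union_disjoint[OF fin] assms(3-5) by blast
  moreover have "(S1 \<union> S2) - (X1 \<union> X2) = (S1 - X1) \<union> (S2 - X2)"
    using assms(3-5) by blast
  then have "(\<Prod>x\<in>(S1 \<union> S2) - (X1 \<union> X2). 1 - prob T x)
      = (\<Prod>x\<in>S1 - X1. 1 - prob T x) * (\<Prod>x\<in>S2 - X2. 1 - prob T x)"
    using prod.union_disjoint[of "S1 - X1" "S2 - X2"] assms(1-3) by auto
  ultimately show ?thesis
    unfolding prob_pattern_def by (simp only: ac_simps)
qed

lemma sum_Pow_Un:
  assumes "S1 \<inter> S2 = {}"
  shows "(\<Sum>X\<in>Pow (S1 \<union> S2). f X) = (\<Sum>X1\<in>Pow S1. \<Sum>X2\<in>Pow S2. f (X1 \<union> X2))"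
proof -
  let ?h = "\<lambda>(X1, X2). X1 \<union> X2"
  have inj: "inj_on ?h (Pow S1 \<times> Pow S2)"
  proof (rule inj_onI, clarify)
    fix X1 X2 Y1 Y2
    assume "X1 \<subseteq> S1" "X2 \<subseteq> S2" "Y1 \<subseteq> S1" "Y2 \<subseteq> S2" "X1 \<union> X2 = Y1 \<union> Y2"
    then show "X1 = Y1 \<and> X2 = Y2" using assms by blast
  qed
  have "Pow (S1 \<union> S2) \<subseteq> ?h ` (Pow S1 \<times> Pow S2)"
  proof
    fix X assume "X \<in> Pow (S1 \<union> S2)"
    then have "X = ?h (X \<inter> S1, X \<inter> S2)" "(X \<inter> S1, X \<inter> S2) \<in> Pow S1 \<times> Pow S2" by auto
    then show "X \<in> ?h ` (Pow S1 \<times> Pow S2)" by (rule image_eqI)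
  qed
  then have image: "?h ` (Pow S1 \<times> Pow S2) = Pow (S1 \<union> S2)" by auto
  have "(\<Sum>X\<in>Pow (S1 \<union> S2). f X) = (\<Sum>p\<in>Pow S1 \<times> Pow S2. f (?h p))"
    using sum.reindex[OF inj, of f] image by simp
  also have "\<dots> = (\<Sum>X1\<in>Pow S1. \<Sum>X2\<in>Pow S2. f (X1 \<union> X2))"
    by (simp add: sum.cartesian_product split_def)
  finally show ?thesis .
qed

lemma EW_Un:
  assumes "finite S1" "finite S2" "S1 \<inter> S2 = {}"
    and Wt_Un: "\<And>X1 X2. X1 \<subseteq> S1 \<Longrightarrow> X2 \<subseteq> S2 \<Longrightarrow>
      Wt T (X1 \<union> X2) = Wt T X1 + Wt T X2 - d * of_bool (X1 \<noteq> {}) * of_bool (X2 \<noteq> {})"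
  shows "EW T (S1 \<union> S2) = EW T S1 + EW T S2 - d * PrS T S1 * PrS T S2"
proof -
  let ?p1 = "prob_pattern T S1" and ?p2 = "prob_pattern T S2"
  have "EW T (S1 \<union> S2) = (\<Sum>X1\<in>Pow S1. \<Sum>X2\<in>Pow S2.
      (?p1 X1 * Wt T X1) * ?p2 X2 + ?p1 X1 * (?p2 X2 * Wt T X2)
      - d * ((?p1 X1 * of_bool (X1 \<noteq> {})) * (?p2 X2 * of_bool (X2 \<noteq> {}))))"
    unfolding EW_eq_sum_prob_pattern sum_Pow_Un[OF assms(3)]
    by (intro sum.cong refl) (simp add: prob_pattern_Un[OF assms(1-3)] Wt_Un algebra_simps)
  also have "\<dots> = (\<Sum>X1\<in>Pow S1. \<Sum>X2\<in>Pow S2. (?p1 X1 * Wt T X1) * ?p2 X2)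
      + (\<Sum>X1\<in>Pow S1. \<Sum>X2\<in>Pow S2. ?p1 X1 * (?p2 X2 * Wt T X2))
      - d * (\<Sum>X1\<in>Pow S1. \<Sum>X2\<in>Pow S2.
               (?p1 X1 * of_bool (X1 \<noteq> {})) * (?p2 X2 * of_bool (X2 \<noteq> {})))"
    by (simp only: sum.distrib sum_subtractf sum_distrib_left)
  also have "\<dots> = (\<Sum>X1\<in>Pow S1. ?p1 X1 * Wt T X1) * (\<Sum>X2\<in>Pow S2. ?p2 X2)
      + (\<Sum>X1\<in>Pow S1. ?p1 X1) * (\<Sum>X2\<in>Pow S2. ?p2 X2 * Wt T X2)
      - d * ((\<Sum>X1\<in>Pow S1. ?p1 X1 * of_bool (X1 \<noteq> {}))
             * (\<Sum>X2\<in>Pow S2. ?p2 X2 * of_bool (X2 \<noteq> {})))"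
    by (simp only: sum_product)
  also have "\<dots> = EW T S1 + EW T S2 - d * PrS T S1 * PrS T S2"
    unfolding EW_eq_sum_prob_pattern
    by (simp only: assms(1,2) sum_prob_pattern sum_prob_pattern_nonempty mult_1_left mult_1_right
        mult.assoc)
  finally show ?thesis .
qed

lemma Wt_Un_VI:
  assumes "is_wtree T" "I1 \<subseteq> idx T a" "I2 \<subseteq> idx T a" "I1 \<inter> I2 = {}"
    and "X1 \<subseteq> VI T a I1" "X2 \<subseteq> VI T a I2"
  shows "Wt T (X1 \<union> X2) = Wt T X1 + Wt T X2 - dist T a * of_bool (X1 \<noteq> {}) * of_bool (X2 \<noteq> {})"
proof -
  define N where "N X = {u \<in> nodes T. u \<noteq> root T \<and> (\<exists>q\<in>X. u \<in> anc T q)}" for X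
  have Wt_N: "Wt T X = sum (weight T) (N X)" for X
    unfolding Wt_def N_def ..
  have "finite (nodes T)"
    using assms(1) unfolding is_wtree_def by blast
  then have fin: "finite (N X)" for X
    by (rule finite_subset[rotated]) (auto simp: N_def)
  have union: "N (X1 \<union> X2) = N X1 \<union> N X2"
    unfolding N_def by blast
  have shared: "sum (weight T) (N X1 \<inter> N X2) = dist T a * of_bool (X1 \<noteq> {}) * of_bool (X2 \<noteq> {})"
  proof (cases "X1 = {} \<or> X2 = {}")
    case True
    then have "N X1 \<inter> N X2 = {}"
      unfolding N_def by auto
    then show ?thesis using True by auto
  next
    case False
    then obtain q1 q2 where q: "q1 \<in> X1" "q2 \<in> X2" by blast
    have "N X1 \<inter> N X2 \<subseteq> N {a}"
      using common_anc_VI[OF assms(1-4)] assms(5,6) unfolding N_def by blast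
    moreover have "anc T a \<subseteq> anc T q1" "anc T a \<subseteq> anc T q2"
      using q assms(5,6) anc_subset_anc_VI[OF assms(1,2)] anc_subset_anc_VI[OF assms(1,3)]
      by (simp_all add: subset_iff)
    then have "N {a} \<subseteq> N X1 \<inter> N X2"
      using q unfolding N_def by blast
    ultimately show ?thesis
      using False unfolding dist_def Wt_N by (simp add: subset_antisym)
  qed
  have "Wt T (X1 \<union> X2) + sum (weight T) (N X1 \<inter> N X2) = Wt T X1 + Wt T X2"
    unfolding Wt_N union by (rule sum.union_inter[OF fin fin])
  then show ?thesis
    using shared by linarith
qed

lemma PrS_bounds:
  assumes "is_wtree T" "S \<subseteq> nodes T"
  shows "0 \<le> PrS T S" "PrS T S \<le> 1"
proof -
  have "0 \<le> 1 - prob T s \<and> 1 - prob T s \<le> 1" if "s \<in> S" for s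
    using assms that unfolding is_wtree_def by force
  then have "(\<Prod>s\<in>S. 1 - prob T s) \<le> 1" "0 \<le> (\<Prod>s\<in>S. 1 - prob T s)"
    by (auto intro: prod_le_1 prod_nonneg)
  then show "0 \<le> PrS T S" "PrS T S \<le> 1"
    unfolding PrS_def by simp_all
qed

lemma G_Un_VI:
  assumes "is_wtree T" "a \<in> nodes T" "I1 \<subseteq> idx T a" "I2 \<subseteq> idx T a" "I1 \<inter> I2 = {}"
    and "S1 \<subseteq> VI T a I1" "S2 \<subseteq> VI T a I2"
  shows "G T (S1 \<union> S2) x = G T S1 x + G T S2 x + (dist T a - x) * PrS T S1 * PrS T S2"
proof -
  have nodes: "finite (nodes T)"
    using assms(1) unfolding is_wtree_def by blast
  have fin: "finite S1" "finite S2"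
    using finite_subset[OF _ nodes] VI_subset_nodes[OF assms(2)] assms(6,7) by blast+
  have disj: "S1 \<inter> S2 = {}"
    using VI_disjoint[OF assms(1,3-5)] assms(6,7) by blast
  have EW: "EW T (S1 \<union> S2) = EW T S1 + EW T S2 - dist T a * PrS T S1 * PrS T S2"
    by (rule EW_Un[OF fin disj], rule Wt_Un_VI[OF assms(1,3-5)]) (use assms(6,7) in auto)
  have prize: "(\<Sum>s\<in>S1 \<union> S2. prize T s * prob T s)
      = (\<Sum>s\<in>S1. prize T s * prob T s) + (\<Sum>s\<in>S2. prize T s * prob T s)"
    by (rule sum.union_disjoint[OF fin disj])
  have miss: "(\<Prod>s\<in>S1 \<union> S2. 1 - prob T s) = (\<Prod>s\<in>S1. 1 - prob T s) * (\<Prod>s\<in>S2. 1 - prob T s)"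
    by (rule prod.union_disjoint[OF fin disj])
  show ?thesis
    unfolding G_def EW prize PrS_def miss by (simp add: algebra_simps)
qed

subsection \<open>Restricting optimal sets\<close>

lemma optimalI:
  "S \<subseteq> VI T a I \<Longrightarrow> (\<And>R. R \<subseteq> VI T a I \<Longrightarrow> G T R x \<le> G T S x) \<Longrightarrow> optimal T a I S x"
  unfolding optimal_def by blast

lemma optimal_subset: "optimal T a I S x \<Longrightarrow> S \<subseteq> VI T a I"
  unfolding optimal_def by blast

lemma optimal_le: "optimal T a I S x \<Longrightarrow> R \<subseteq> VI T a I \<Longrightarrow> G T R x \<le> G T S x"
  unfolding optimal_def by blast

lemma matr_subset:
  assumes "S \<in> matr T a I"
  shows "S \<subseteq> VI T a I"
proof -
  obtain x where "optimal T a I S x"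
    using assms unfolding matr_def by blast
  then show ?thesis by (rule optimal_subset)
qed

context
  fixes T :: "'a wtree" and a :: 'a and I1 I2 :: "'a option set" and S2 :: "'a set" and x :: real
  assumes tree: "is_wtree T" and node: "a \<in> nodes T"
    and idx: "I1 \<subseteq> idx T a" "I2 \<subseteq> idx T a" "I1 \<inter> I2 = {}"
    and S2: "S2 \<subseteq> VI T a I2"
begin

definition shifted :: real where
  "shifted = x + (dist T a - x) * PrS T S2"

lemma G_Un_shifted: "S1 \<subseteq> VI T a I1 \<Longrightarrow> G T (S1 \<union> S2) x = G T S1 shifted + G T S2 x"
  using G_Un_VI[OF tree node idx _ S2] unfolding shifted_def G_def by (simp add: algebra_simps)

lemma shifted_bounds: "0 \<le> x \<Longrightarrow> x \<le> dist T a \<Longrightarrow> 0 \<le> shifted \<and> shifted \<le> dist T a"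
  using PrS_bounds[OF tree] S2 VI_subset_nodes[OF node] unfolding shifted_def
  by (smt (verit, best) mult_left_le mult_nonneg_nonneg subset_trans)

lemma optimal_restrict:
  assumes "S1 \<subseteq> VI T a I1" "optimal T a (I1 \<union> I2) (S1 \<union> S2) x"
  shows "optimal T a I1 S1 shifted"
proof (rule optimalI[OF assms(1)])
  fix R assume R: "R \<subseteq> VI T a I1"
  then have "R \<union> S2 \<subseteq> VI T a (I1 \<union> I2)"
    using S2 unfolding VI_Un by blast
  then have "G T (R \<union> S2) x \<le> G T (S1 \<union> S2) x"
    by (rule optimal_le[OF assms(2)])
  then show "G T R shifted \<le> G T S1 shifted"
    unfolding G_Un_shifted[OF R] G_Un_shifted[OF assms(1)] by simp
qed

lemma optimal_extend:
  assumes "S1 \<subseteq> VI T a I1" "optimal T a (I1 \<union> I2) (S1 \<union> S2) x"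
    and "optimal T a I1 R shifted"
  shows "optimal T a (I1 \<union> I2) (R \<union> S2) x"
proof -
  have R: "R \<subseteq> VI T a I1"
    by (rule optimal_subset[OF assms(3)])
  have le: "G T (S1 \<union> S2) x \<le> G T (R \<union> S2) x"
    unfolding G_Un_shifted[OF R] G_Un_shifted[OF assms(1)]
    using optimal_le[OF assms(3) assms(1)] by simp
  have "R \<union> S2 \<subseteq> VI T a (I1 \<union> I2)"
    using R S2 unfolding VI_Un by blast
  then show ?thesis
  proof (rule optimalI)
    fix S' assume "S' \<subseteq> VI T a (I1 \<union> I2)"
    show "G T S' x \<le> G T (R \<union> S2) x"
      using optimal_le[OF assms(2) \<open>S' \<subseteq> VI T a (I1 \<union> I2)\<close>] le by (rule order_trans)
  qed
qed

end

lemma matr_restrict: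
  assumes "is_wtree T" "a \<in> nodes T" "I1 \<subseteq> idx T a" "I2 \<subseteq> idx T a" "I1 \<inter> I2 = {}"
    and "S \<in> matr T a (I1 \<union> I2)"
  shows "S \<inter> VI T a I1 \<in> matr T a I1"
proof -
  obtain x where x: "0 \<le> x" "x \<le> dist T a" and opt: "optimal T a (I1 \<union> I2) S x"
    and maximal: "\<And>S'. S \<subset> S' \<Longrightarrow> \<not> optimal T a (I1 \<union> I2) S' x"
    using assms(6) unfolding matr_def by blast
  define S1 where "S1 = S \<inter> VI T a I1"
  define S2 where "S2 = S \<inter> VI T a I2"
  have S1: "S1 \<subseteq> VI T a I1" and S2: "S2 \<subseteq> VI T a I2"
    unfolding S1_def S2_def by blast+
  have S: "S = S1 \<union> S2"
    using optimal_subset[OF opt] unfolding S1_def S2_def VI_Un by blast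
  note split = assms(1-5) S2
  have "\<not> optimal T a I1 R (shifted T a S2 x)" if "S1 \<subset> R" for R
  proof
    assume R: "optimal T a I1 R (shifted T a S2 x)"
    have "R \<inter> S2 = {}"
      using optimal_subset[OF R] S2 VI_disjoint[OF assms(1,3-5)] by blast
    then have "S \<subset> R \<union> S2"
      using S that by blast
    moreover have "optimal T a (I1 \<union> I2) (R \<union> S2) x"
      using optimal_extend[OF split S1 _ R] opt S by simp
    ultimately show False
      using maximal by blast
  qed
  moreover have "optimal T a I1 S1 (shifted T a S2 x)"
    using optimal_restrict[OF split S1] opt S by simp
  ultimately show ?thesis
    using shifted_bounds[OF split x] unfolding matr_def S1_def by blast
qed

theorem proposition7:
  fixes T :: "'a wtree" and a :: 'a and I I1 I2 :: "'a option set"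
  assumes "is_wtree T" and "a \<in> nodes T"
    and "I \<subseteq> idx T a" and "I = I1 \<union> I2" and "I1 \<inter> I2 = {}"
  shows "(\<forall>S\<in>matr T a I. S \<inter> VI T a I1 \<in> matr T a I1 \<and> S \<inter> VI T a I2 \<in> matr T a I2)
       \<and> matr T a (idx T a) \<subseteq>
           {\<Union>i\<in>idx T a. Si i | Si. \<forall>i\<in>idx T a. Si i \<in> matr T a {i}}"
proof (intro conjI ballI subsetI)
  have sub: "I1 \<subseteq> idx T a" "I2 \<subseteq> idx T a"
    using assms(3,4) by blast+
  have swap: "I = I2 \<union> I1" "I2 \<inter> I1 = {}"
    using assms(4,5) by blast+
  fix S assume "S \<in> matr T a I"
  then show "S \<inter> VI T a I1 \<in> matr T a I1" "S \<inter> VI T a I2 \<in> matr T a I2"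
    using matr_restrict[OF assms(1,2) sub assms(5)] matr_restrict[OF assms(1,2) sub(2,1) swap(2)]
      assms(4) swap(1) by simp_all
next
  fix S assume S: "S \<in> matr T a (idx T a)"
  have "S \<inter> VI T a {i} \<in> matr T a {i}" if i: "i \<in> idx T a" for i
  proof -
    have "{i} \<union> (idx T a - {i}) = idx T a"
      using i by blast
    then show ?thesis
      using matr_restrict[OF assms(1,2), of "{i}" "idx T a - {i}"] S i by simp
  qed
  moreover have "S = (\<Union>i\<in>idx T a. S \<inter> VI T a {i})"
    using matr_subset[OF S] unfolding VI_def by blast
  ultimately show "S \<in> {\<Union>i\<in>idx T a. Si i | Si. \<forall>i\<in>idx T a. Si i \<in> matr T a {i}}"
    by blast
qed

end
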